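(* Let $\mathcal{C}=(\mathcal{T},\mathcal{I},\mathcal{R})$ be an extraction context with thresholds \textit{minsupp} and \textit{minbond}. Then $\mathcal{RCPR}=\mathcal{CRCP}\cup\mathcal{MRCP}$, with each element $J$ recorded together with $\mathit{Supp}(\wedge J)$ and $\mathit{bond}(J)$, is an exact concise representation of the set $\mathcal{RCP}$ of rare correlated patterns.
   Context: An extraction context is a triple $\mathcal{C}=(\mathcal{T},\mathcal{I},\mathcal{R})$ with $\mathcal{T}$ a finite set of transactions, $\mathcal{I}$ a finite set of items and $\mathcal{R}\subseteq\mathcal{T}\times\mathcal{I}$. For a pattern $I\subseteq\mathcal{I}$: $\mathit{Supp}(\wedge I)=|\{t:\forall i\in I,(t,i)\in\mathcal{R}\}|$, $\mathit{Supp}(\vee I)=|\{t:\exists i\in I,(t,i)\in\mathcal{R}\}|$, and for nonempty $I$, $\mathit{bond}(I)=\mathit{Supp}(\wedge I)/\mathit{Supp}(\vee I)$ (with $\mathit{bond}(\emptyset)=+\infty$ by convention). $\mathcal{RCP}=\{I\subseteq\mathcal{I}:\mathit{Supp}(\wedge I)<\textit{minsupp},\ \mathit{bond}(I)\ge\textit{minbond}\}$. Closed rare correlated patterns: $\mathcal{CRCP}=\{I\in\mathcal{RCP}:\forall I_1\supsetneq I,\ \mathit{bond}(I)>\mathit{bond}(I_1)\}$. Minimal rare correlated patterns: $\mathcal{MRCP}=\{I\in\mathcal{RCP}:\forall I_1\subsetneq I,\ \mathit{bond}(I)<\mathit{bond}(I_1)\}$. A family $\mathcal{S}\subseteq\mathcal{RCP}$,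 with each $J\in\mathcal{S}$ recorded together with $\mathit{Supp}(\wedge J)$ and $\mathit{bond}(J)$, is an exact concise representation of $\mathcal{RCP}$ if, for every pattern $I\subseteq\mathcal{I}$, the recorded data $\{(J,\mathit{Supp}(\wedge J),\mathit{bond}(J)):J\in\mathcal{S}\}$ alone suffice to decide whether $I\in\mathcal{RCP}$ and, when $I\in\mathcal{RCP}$, to determine exactly $\mathit{Supp}(\wedge I)$ and $\mathit{bond}(I)$. *)

theory Defs
  imports "HOL-Library.Extended_Real"
begin

definition extraction_context :: "'t set \<Rightarrow> 'i set \<Rightarrow> ('t \<times> 'i) set \<Rightarrow> bool" where
  "extraction_context T Is R \<longleftrightarrow> finite T \<and> finite Is \<and> R \<subseteq> T \<times> Is"

definition supp_conj :: "'t set \<Rightarrow> ('t \<times> 'i) set \<Rightarrow> 'i set \<Rightarrow> nat" where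
  "supp_conj T R I = card {t \<in> T. \<forall>i \<in> I. (t, i) \<in> R}"

definition supp_disj :: "'t set \<Rightarrow> ('t \<times> 'i) set \<Rightarrow> 'i set \<Rightarrow> nat" where
  "supp_disj T R I = card {t \<in> T. \<exists>i \<in> I. (t, i) \<in> R}"

definition bond :: "'t set \<Rightarrow> ('t \<times> 'i) set \<Rightarrow> 'i set \<Rightarrow> ereal" where
  "bond T R I = (if I = {} then \<infinity>
     else ereal (real (supp_conj T R I) / real (supp_disj T R I)))"

definition RCP :: "'t set \<Rightarrow> 'i set \<Rightarrow> ('t \<times> 'i) set \<Rightarrow> real \<Rightarrow> real \<Rightarrow> 'i set set" where
  "RCP T Is R minsupp minbond =
     {I. I \<subseteq> Is \<and> real (supp_conj T R I) < minsupp \<and> bond T R I \<ge> ereal minbond}"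

definition CRCP :: "'t set \<Rightarrow> 'i set \<Rightarrow> ('t \<times> 'i) set \<Rightarrow> real \<Rightarrow> real \<Rightarrow> 'i set set" where
  "CRCP T Is R minsupp minbond =
     {I \<in> RCP T Is R minsupp minbond. \<forall>I1. I \<subset> I1 \<and> I1 \<subseteq> Is \<longrightarrow> bond T R I > bond T R I1}"

definition MRCP :: "'t set \<Rightarrow> 'i set \<Rightarrow> ('t \<times> 'i) set \<Rightarrow> real \<Rightarrow> real \<Rightarrow> 'i set set" where
  "MRCP T Is R minsupp minbond =
     {I \<in> RCP T Is R minsupp minbond. \<forall>I1. I1 \<subset> I \<longrightarrow> bond T R I < bond T R I1}"

text \<open>A selection S (a family of patterns chosen from each context) is an exact concise
representation of RCP if S is always contained in RCP and there is one decoding function,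
uniform over all extraction contexts, which from the recorded triples
(J, Supp(\<and>J), bond(J)), J \<in> S, and a pattern I \<subseteq> Is decides whether I \<in> RCP and,
if so, returns Supp(\<and>I) and bond(I).\<close>

definition recorded ::
  "'t set \<Rightarrow> ('t \<times> 'i) set \<Rightarrow> 'i set set \<Rightarrow> ('i set \<times> nat \<times> ereal) set" where
  "recorded T R S = (\<lambda>J. (J, supp_conj T R J, bond T R J)) ` S"

definition exact_concise_representation ::
  "real \<Rightarrow> real \<Rightarrow> ('t set \<Rightarrow> 'i set \<Rightarrow> ('t \<times> 'i) set \<Rightarrow> 'i set set) \<Rightarrow> bool" where
  "exact_concise_representation minsupp minbond S \<longleftrightarrow>
     (\<forall>T Is R. extraction_context T Is R \<longrightarrow> S T Is R \<subseteq> RCP T Is R minsupp minbond) \<and>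
     (\<exists>dec :: ('i set \<times> nat \<times> ereal) set \<Rightarrow> 'i set \<Rightarrow> (nat \<times> ereal) option.
        \<forall>T Is R. extraction_context T Is R \<longrightarrow>
          (\<forall>I. I \<subseteq> Is \<longrightarrow>
             dec (recorded T R (S T Is R)) I =
               (if I \<in> RCP T Is R minsupp minbond
                then Some (supp_conj T R I, bond T R I) else None)))"

end

theory Submission
  imports Defs
begin

text \<open>The bond is antitone in the pattern, and along a chain \<open>I \<subseteq> J\<close> equal bonds force equal
conjunctive supports. Consequently \<open>RCP\<close> is convex for inclusion, and every rare correlated
pattern lies above a minimal one and below a closed one with the same bond (take a minimal
subset, resp. a maximal superset, with that bond). So \<open>I\<close> is in \<open>RCP\<close> iff it lies between two
recorded patterns, and then its bond and support are those of a recorded superset of maximal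
bond.\<close>

lemma supp_conj_antimono:
  assumes "finite T" "I \<subseteq> J"
  shows "supp_conj T R J \<le> supp_conj T R I"
  unfolding supp_conj_def using assms by (intro card_mono) auto

lemma supp_disj_mono:
  assumes "finite T" "I \<subseteq> J"
  shows "supp_disj T R I \<le> supp_disj T R J"
  unfolding supp_disj_def using assms by (intro card_mono) auto

lemma supp_conj_le_supp_disj:
  assumes "finite T" "I \<noteq> {}"
  shows "supp_conj T R I \<le> supp_disj T R I"
  unfolding supp_conj_def supp_disj_def using assms by (intro card_mono) auto

lemma antimono_bond:
  fixes T :: "'t set" and R :: "('t \<times> 'i) set"
  assumes "finite T"
  shows "antimono (bond T R)"
proof (rule antimonoI)
  fix I J :: "'i set"
  assume IJ: "I \<subseteq> J"
  show "bond T R J \<le> bond T R I"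
  proof (cases "I = {}")
    case False
    have conj: "supp_conj T R J \<le> supp_conj T R I"
      using supp_conj_antimono[OF assms IJ] .
    have disj: "supp_disj T R I \<le> supp_disj T R J"
      using supp_disj_mono[OF assms IJ] .
    have "real (supp_conj T R J) / real (supp_disj T R J)
          \<le> real (supp_conj T R I) / real (supp_disj T R I)"
    proof (cases "supp_disj T R I = 0")
      case True
      then show ?thesis
        using conj supp_conj_le_supp_disj[where R = R, OF assms False] by simp
    next
      case False
      then show ?thesis using conj disj by (intro frac_le) simp_all
    qed
    then show ?thesis using False IJ by (auto simp: bond_def)
  qed (simp add: bond_def)
qed

lemma supp_conj_eq_if_bond_eq:
  assumes "finite T" "I \<subseteq> J" "bond T R I = bond T R J"
  shows "supp_conj T R I = supp_conj T R J"
proof (cases "I = {}")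
  case True
  then have "J = {}" using assms(3) by (auto simp: bond_def split: if_splits)
  then show ?thesis using True by simp
next
  case False
  let ?cI = "supp_conj T R I" and ?cJ = "supp_conj T R J"
  let ?dI = "supp_disj T R I" and ?dJ = "supp_disj T R J"
  have conj: "?cJ \<le> ?cI" using supp_conj_antimono[OF assms(1,2)] .
  have disj: "?dI \<le> ?dJ" using supp_disj_mono[OF assms(1,2)] .
  show ?thesis
  proof (cases "?dI = 0")
    case True
    then show ?thesis using conj supp_conj_le_supp_disj[where R = R, OF assms(1) False] by simp
  next
    case dI_pos: False
    have "J \<noteq> {}" using False assms(2) by blast
    then have "real ?cI / real ?dI = real ?cJ / real ?dJ"
      using assms(3) False by (simp add: bond_def)
    then have cross: "?cI * ?dJ = ?cJ * ?dI"
      using dI_pos disj by (simp add: field_simps flip: of_nat_mult)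
    have "?cI * ?dI \<le> ?cJ * ?dI"
      using mult_le_mono2[OF disj, of ?cI] cross by simp
    then show ?thesis using conj dI_pos by simp
  qed
qed

lemma antimono_obtain_maximal_superset:
  fixes f :: "'a set \<Rightarrow> 'b::order"
  assumes "antimono f" "finite U" "I \<subseteq> U"
  obtains J where "I \<subseteq> J" "J \<subseteq> U" "f J = f I" "\<And>J'. J \<subset> J' \<Longrightarrow> J' \<subseteq> U \<Longrightarrow> f J' < f J"
proof -
  let ?F = "{J. I \<subseteq> J \<and> J \<subseteq> U \<and> f J = f I}"
  have "finite ?F" using assms(2) by (auto intro: finite_subset[of _ "Pow U"])
  moreover have "?F \<noteq> {}" using assms(3) by blast
  ultimately obtain J where J: "J \<in> ?F" and maximal: "\<forall>J' \<in> ?F. J \<subseteq> J' \<longrightarrow> J = J'"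
    by (metis (no_types, lifting) finite_has_maximal)
  have "f J' < f J" if "J \<subset> J'" "J' \<subseteq> U" for J'
  proof -
    have "f J' \<le> f J" using antimonoD[OF assms(1)] that(1) by blast
    moreover have "f J' \<noteq> f J"
    proof
      assume "f J' = f J"
      then have "J' \<in> ?F" using J that by auto
      then show False using maximal that by blast
    qed
    ultimately show ?thesis by simp
  qed
  with J that show ?thesis by blast
qed

lemma antimono_obtain_minimal_subset:
  fixes f :: "'a set \<Rightarrow> 'b::order"
  assumes "antimono f" "finite I"
  obtains K where "K \<subseteq> I" "f K = f I" "\<And>K'. K' \<subset> K \<Longrightarrow> f K < f K'"
proof -
  let ?F = "{K. K \<subseteq> I \<and> f K = f I}"
  have "finite ?F" using assms(2) by simp
  moreover have "?F \<noteq> {}" by blast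
  ultimately obtain K where K: "K \<in> ?F" and minimal: "\<forall>K' \<in> ?F. K' \<subseteq> K \<longrightarrow> K = K'"
    by (metis (no_types, lifting) finite_has_minimal)
  have "f K < f K'" if "K' \<subset> K" for K'
  proof -
    have "f K \<le> f K'" using antimonoD[OF assms(1)] that by blast
    moreover have "f K \<noteq> f K'"
    proof
      assume "f K = f K'"
      then have "K' \<in> ?F" using K that by auto
      then show False using minimal that by blast
    qed
    ultimately show ?thesis by simp
  qed
  with K that show ?thesis by blast
qed

lemma RCP_convex:
  assumes T: "finite T"
    and K: "K \<in> RCP T Is R minsupp minbond" and J: "J \<in> RCP T Is R minsupp minbond"
    and KI: "K \<subseteq> I" and IJ: "I \<subseteq> J"
  shows "I \<in> RCP T Is R minsupp minbond"
proof -
  have "real (supp_conj T R I) < minsupp"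
    using supp_conj_antimono[OF T KI, of R] K by (simp add: RCP_def)
  moreover have "ereal minbond \<le> bond T R I"
    using antimonoD[OF antimono_bond[OF T] IJ, of R] J by (auto simp: RCP_def)
  ultimately show ?thesis using IJ J by (auto simp: RCP_def)
qed

lemma exists_CRCP_superset_same_bond:
  assumes "extraction_context T Is R" "I \<in> RCP T Is R minsupp minbond"
  shows "\<exists>J \<in> CRCP T Is R minsupp minbond. I \<subseteq> J \<and> bond T R J = bond T R I"
proof -
  have T: "finite T" and Is: "finite Is" and I: "I \<subseteq> Is"
    using assms by (auto simp: extraction_context_def RCP_def)
  obtain J where J: "I \<subseteq> J" "J \<subseteq> Is" "bond T R J = bond T R I"
    and closed: "\<And>J'. J \<subset> J' \<Longrightarrow> J' \<subseteq> Is \<Longrightarrow> bond T R J' < bond T R J"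
    using antimono_obtain_maximal_superset[OF antimono_bond[OF T] Is I] by blast
  have "supp_conj T R J = supp_conj T R I"
    using supp_conj_eq_if_bond_eq[OF T J(1)] J(3) by simp
  then have "J \<in> RCP T Is R minsupp minbond" using assms(2) J by (simp add: RCP_def)
  then show ?thesis using J closed by (intro bexI[of _ J]) (auto simp: CRCP_def)
qed

lemma exists_MRCP_subset:
  assumes "extraction_context T Is R" "I \<in> RCP T Is R minsupp minbond"
  shows "\<exists>K \<in> MRCP T Is R minsupp minbond. K \<subseteq> I"
proof -
  have T: "finite T" and I: "finite I"
    using assms by (auto simp: extraction_context_def RCP_def intro: finite_subset)
  obtain K where K: "K \<subseteq> I" "bond T R K = bond T R I"
    and minimal: "\<And>K'. K' \<subset> K \<Longrightarrow> bond T R K < bond T R K'"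
    using antimono_obtain_minimal_subset[OF antimono_bond[OF T] I] by blast
  have "supp_conj T R K = supp_conj T R I"
    using supp_conj_eq_if_bond_eq[OF T K(1)] K(2) by simp
  then have "K \<in> RCP T Is R minsupp minbond" using assms(2) K by (auto simp: RCP_def)
  then show ?thesis using K minimal by (intro bexI[of _ K]) (auto simp: MRCP_def)
qed

lemma snd_arg_max_recorded_superset:
  assumes T: "finite T" and J: "J \<in> S" "I \<subseteq> J" "bond T R J = bond T R I"
  shows "snd (ARG_MAX (\<lambda>r. snd (snd r)) r. r \<in> recorded T R S \<and> I \<subseteq> fst r)
           = (supp_conj T R I, bond T R I)"
proof -
  let ?P = "\<lambda>r. r \<in> recorded T R S \<and> I \<subseteq> fst r"
  let ?r = "ARG_MAX (\<lambda>r. snd (snd r)) r. ?P r"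
  have P_bond: "snd (snd r) \<le> bond T R I" if r: "?P r" for r
  proof -
    obtain J' where "J' \<in> S" "r = (J', supp_conj T R J', bond T R J')"
      using r unfolding recorded_def by blast
    then show ?thesis using r antimonoD[OF antimono_bond[OF T], of I J'] by simp
  qed
  have PJ: "?P (J, supp_conj T R J, bond T R J)" using J by (auto simp: recorded_def)
  have "?P ?r \<and> bond T R I \<le> snd (snd ?r)"
  proof (rule arg_maxI[where P = ?P and f = "\<lambda>r. snd (snd r)"
        and x = "(J, supp_conj T R J, bond T R J)" and Q = "\<lambda>r. ?P r \<and> bond T R I \<le> snd (snd r)"])
    show "?P (J, supp_conj T R J, bond T R J)" by (rule PJ)
    show "\<not> snd (snd r) > snd (snd (J, supp_conj T R J, bond T R J))" if "?P r" for r
      using P_bond[OF that] J(3) by simp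
    show "?P r \<and> bond T R I \<le> snd (snd r)"
      if "?P r" "\<forall>r'. ?P r' \<longrightarrow> \<not> snd (snd r') > snd (snd r)" for r
      using that(1) that(2)[rule_format, OF PJ] J(3) by (simp add: not_less)
  qed
  moreover from this obtain J' where J': "J' \<in> S" "?r = (J', supp_conj T R J', bond T R J')"
    unfolding recorded_def by blast
  ultimately have IJ': "I \<subseteq> J'" and bond_J': "bond T R I = bond T R J'"
    using P_bond[of ?r] by auto
  then show ?thesis
    using J'(2) supp_conj_eq_if_bond_eq[OF T IJ' bond_J'] by simp
qed

definition decode_RCP :: "('i set \<times> nat \<times> ereal) set \<Rightarrow> 'i set \<Rightarrow> (nat \<times> ereal) option" where
  "decode_RCP Rec I =
     (if (\<exists>r \<in> Rec. fst r \<subseteq> I) \<and> (\<exists>r \<in> Rec. I \<subseteq> fst r)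
      then Some (snd (ARG_MAX (\<lambda>r. snd (snd r)) r. r \<in> Rec \<and> I \<subseteq> fst r))
      else None)"

lemma decode_RCP_recorded:
  assumes T: "finite T"
    and S: "S \<subseteq> RCP T Is R minsupp minbond"
    and below: "\<And>I. I \<in> RCP T Is R minsupp minbond \<Longrightarrow> \<exists>K \<in> S. K \<subseteq> I"
    and above: "\<And>I. I \<in> RCP T Is R minsupp minbond \<Longrightarrow> \<exists>J \<in> S. I \<subseteq> J \<and> bond T R J = bond T R I"
  shows "decode_RCP (recorded T R S) I =
           (if I \<in> RCP T Is R minsupp minbond then Some (supp_conj T R I, bond T R I) else None)"
proof (cases "I \<in> RCP T Is R minsupp minbond")
  case True
  obtain K where K: "K \<in> S" "K \<subseteq> I" using below[OF True] by blast
  obtain J where J: "J \<in> S" "I \<subseteq> J" "bond T R J = bond T R I" using above[OF True] by blast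
  have "(\<exists>r \<in> recorded T R S. fst r \<subseteq> I) \<and> (\<exists>r \<in> recorded T R S. I \<subseteq> fst r)"
    using J K by (auto simp: recorded_def)
  then show ?thesis
    using True snd_arg_max_recorded_superset[OF T J] by (simp add: decode_RCP_def)
next
  case False
  have "\<not> ((\<exists>K \<in> S. K \<subseteq> I) \<and> (\<exists>J \<in> S. I \<subseteq> J))"
    using False RCP_convex[OF T] S by blast
  then show ?thesis using False by (simp add: decode_RCP_def recorded_def)
qed

theorem mainTheorem4:
  fixes minsupp minbond :: real
  shows "exact_concise_representation minsupp minbond
           (\<lambda>(T :: 't set) (Is :: 'i set) R.
              CRCP T Is R minsupp minbond \<union> MRCP T Is R minsupp minbond)"
proof -
  have "decode_RCP (recorded T R (CRCP T Is R minsupp minbond \<union> MRCP T Is R minsupp minbond)) I =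
          (if I \<in> RCP T Is R minsupp minbond then Some (supp_conj T R I, bond T R I) else None)"
    if ctx: "extraction_context T Is R" for T :: "'t set" and Is :: "'i set" and R I
  proof (rule decode_RCP_recorded)
    show "finite T" using ctx by (simp add: extraction_context_def)
    show "\<exists>K \<in> CRCP T Is R minsupp minbond \<union> MRCP T Is R minsupp minbond. K \<subseteq> I'"
      if "I' \<in> RCP T Is R minsupp minbond" for I'
      using exists_MRCP_subset[OF ctx that] by blast
    show "\<exists>J \<in> CRCP T Is R minsupp minbond \<union> MRCP T Is R minsupp minbond.
            I' \<subseteq> J \<and> bond T R J = bond T R I'"
      if "I' \<in> RCP T Is R minsupp minbond" for I'
      using exists_CRCP_superset_same_bond[OF ctx that] by blast
  qed (auto simp: CRCP_def MRCP_def)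
  then show ?thesis
    unfolding exact_concise_representation_def
    by (intro conjI exI[of _ decode_RCP]) (auto simp: CRCP_def MRCP_def)
qed

end
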